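(* Let $s\colon A\to X$ and $t\colon A\to Y$ be isometries in a pre-Hilbert $*$-category, and let $s^\perp\colon X\ominus A\to X$ and $t^\perp\colon Y\ominus A\to Y$ be isometric orthogonal complements of $s$ and $t$. Then the square \[ \begin{bmatrix} s^{\perp *}\\ s^*\\ 0\end{bmatrix} s = \begin{bmatrix} 0\\ t^*\\ t^{\perp *}\end{bmatrix} t \] with legs $\begin{bmatrix} s^{\perp *}\\ s^*\\ 0\end{bmatrix}\colon X\to (X\ominus A)\oplus A\oplus (Y\ominus A)$ and $\begin{bmatrix} 0\\ t^*\\ t^{\perp *}\end{bmatrix}\colon Y\to (X\ominus A)\oplus A\oplus (Y\ominus A)$ is a pushout square, and the cospan formed by these two morphisms is a codilator of $ts^*\colon X\to Y$.
   Context: A $*$-category is a category with a choice of $f^*\colon Y\to X$ for each $f\colon X\to Y$ such that $1^*=1$, $(gf)^*=f^*g^*$, $(f^* )^*=f$; $f$ is an isometry if $f^*f=1$. A pre-Hilbert $*$-category is a $*$-category with (R1) a zero object, (R2) orthonormal biproducts of all pairs (and hence all finite families) of objects, i.e. biproducts with projections equal to the adjoints of the injections (column matrices denote maps into such biproducts), (R3) an isometric kernel for every morphism, and (R4) every diagonal $\Delta\colon X\to X\oplus X$ a kernel of some morphism. An isometric orthogonal complement of a monomorphism $s\colon A\to X$ is an isometric kernel $s^\perp\colon X\ominus A\to X$ of $s^*$. A codilation of $f\colon X\to Y$ is a cospan $(T,t_1,t_2)$ with $t_1\colon X\to T$, $t_2\colon Y\to T$ isometries and $t_2^*t_1=f$.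 A codilator of $f$ is a codilation $(S,s_1,s_2)$ such that for every codilation $(T,t_1,t_2)$ of $f$ there is a unique isometry $t\colon S\to T$ with $ts_1=t_1$ and $ts_2=t_2$. *)

theory Defs
  imports Main
begin

text \<open>Objects are all
elements of type 'o, morphisms all elements of type 'm.  Cmp C g f is the
composite g o f (meaningful when Cod f = Dom g); Adj C f is f^*.\<close>

record ('o, 'm) scat =
  Dom :: "'m \<Rightarrow> 'o"
  Cod :: "'m \<Rightarrow> 'o"
  Id  :: "'o \<Rightarrow> 'm"
  Cmp :: "'m \<Rightarrow> 'm \<Rightarrow> 'm"
  Adj :: "'m \<Rightarrow> 'm"

definition hom :: "('o, 'm, 'x) scat_scheme \<Rightarrow> 'o \<Rightarrow> 'o \<Rightarrow> 'm set" where
  "hom C X Y = {f. Dom C f = X \<and> Cod C f = Y}"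

definition category :: "('o, 'm, 'x) scat_scheme \<Rightarrow> bool" where
  "category C \<longleftrightarrow>
     (\<forall>X. Id C X \<in> hom C X X) \<and>
     (\<forall>f g. Cod C f = Dom C g \<longrightarrow>
        Dom C (Cmp C g f) = Dom C f \<and> Cod C (Cmp C g f) = Cod C g) \<and>
     (\<forall>f g h. Cod C f = Dom C g \<and> Cod C g = Dom C h \<longrightarrow>
        Cmp C h (Cmp C g f) = Cmp C (Cmp C h g) f) \<and>
     (\<forall>f. Cmp C f (Id C (Dom C f)) = f \<and> Cmp C (Id C (Cod C f)) f = f)"

definition star_category :: "('o, 'm, 'x) scat_scheme \<Rightarrow> bool" where
  "star_category C \<longleftrightarrow> category C \<and>
     (\<forall>f. Adj C f \<in> hom C (Cod C f) (Dom C f)) \<and>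
     (\<forall>X. Adj C (Id C X) = Id C X) \<and>
     (\<forall>f g. Cod C f = Dom C g \<longrightarrow> Adj C (Cmp C g f) = Cmp C (Adj C f) (Adj C g)) \<and>
     (\<forall>f. Adj C (Adj C f) = f)"

definition isometry :: "('o, 'm, 'x) scat_scheme \<Rightarrow> 'm \<Rightarrow> bool" where
  "isometry C f \<longleftrightarrow> Cmp C (Adj C f) f = Id C (Dom C f)"

definition zero_obj :: "('o, 'm, 'x) scat_scheme \<Rightarrow> 'o \<Rightarrow> bool" where
  "zero_obj C Z \<longleftrightarrow> (\<forall>X. (\<exists>!f. f \<in> hom C X Z) \<and> (\<exists>!f. f \<in> hom C Z X))"

definition zero_mor :: "('o, 'm, 'x) scat_scheme \<Rightarrow> 'm \<Rightarrow> bool" where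
  "zero_mor C f \<longleftrightarrow> (\<exists>Z g h. zero_obj C Z \<and> g \<in> hom C (Dom C f) Z \<and>
      h \<in> hom C Z (Cod C f) \<and> f = Cmp C h g)"

definition orth_biproduct ::
  "('o, 'm, 'x) scat_scheme \<Rightarrow> 'i set \<Rightarrow> ('i \<Rightarrow> 'o) \<Rightarrow> 'o \<Rightarrow> ('i \<Rightarrow> 'm) \<Rightarrow> bool" where
  "orth_biproduct C I X B \<iota> \<longleftrightarrow>
     (\<forall>k\<in>I. \<iota> k \<in> hom C (X k) B \<and> isometry C (\<iota> k)) \<and>
     (\<forall>j\<in>I. \<forall>k\<in>I. j \<noteq> k \<longrightarrow> zero_mor C (Cmp C (Adj C (\<iota> j)) (\<iota> k))) \<and>
     (\<forall>W f. (\<forall>k\<in>I. f k \<in> hom C (X k) W) \<longrightarrow>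
        (\<exists>!h. h \<in> hom C B W \<and> (\<forall>k\<in>I. Cmp C h (\<iota> k) = f k))) \<and>
     (\<forall>W f. (\<forall>k\<in>I. f k \<in> hom C W (X k)) \<longrightarrow>
        (\<exists>!h. h \<in> hom C W B \<and> (\<forall>k\<in>I. Cmp C (Adj C (\<iota> k)) h = f k)))"

definition kernel :: "('o, 'm, 'x) scat_scheme \<Rightarrow> 'm \<Rightarrow> 'm \<Rightarrow> bool" where
  "kernel C k f \<longleftrightarrow> Cod C k = Dom C f \<and> zero_mor C (Cmp C f k) \<and>
     (\<forall>g. Cod C g = Dom C f \<longrightarrow> zero_mor C (Cmp C f g) \<longrightarrow>
        (\<exists>!h. Cod C h = Dom C k \<and> Cmp C k h = g))"

definition pre_hilbert_star_category :: "('o, 'm, 'x) scat_scheme \<Rightarrow> bool" where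
  "pre_hilbert_star_category C \<longleftrightarrow> star_category C \<and>
     (\<exists>Z. zero_obj C Z) \<and>
     (\<forall>X1 X2. \<exists>B \<iota>. orth_biproduct C {0::nat, 1} (\<lambda>k. if k = 0 then X1 else X2) B \<iota>) \<and>
     (\<forall>f. \<exists>k. kernel C k f \<and> isometry C k) \<and>
     (\<forall>X B (\<iota> :: nat \<Rightarrow> 'm) d. orth_biproduct C {0, 1} (\<lambda>_. X) B \<iota> \<longrightarrow>
        d \<in> hom C X B \<longrightarrow> Cmp C (Adj C (\<iota> 0)) d = Id C X \<longrightarrow>
        Cmp C (Adj C (\<iota> 1)) d = Id C X \<longrightarrow> (\<exists>g. kernel C d g))"

definition iso_orth_complement :: "('o, 'm, 'x) scat_scheme \<Rightarrow> 'm \<Rightarrow> 'm \<Rightarrow> bool" where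
  "iso_orth_complement C s sp \<longleftrightarrow> isometry C sp \<and> kernel C sp (Adj C s)"

definition pushout_square :: "('o, 'm, 'x) scat_scheme \<Rightarrow> 'm \<Rightarrow> 'm \<Rightarrow> 'm \<Rightarrow> 'm \<Rightarrow> bool" where
  "pushout_square C s t u v \<longleftrightarrow>
     Dom C s = Dom C t \<and> Cod C s = Dom C u \<and> Cod C t = Dom C v \<and> Cod C u = Cod C v \<and>
     Cmp C u s = Cmp C v t \<and>
     (\<forall>a b. Dom C a = Cod C s \<and> Dom C b = Cod C t \<and> Cod C a = Cod C b \<and>
        Cmp C a s = Cmp C b t \<longrightarrow>
        (\<exists>!h. h \<in> hom C (Cod C u) (Cod C a) \<and> Cmp C h u = a \<and> Cmp C h v = b))"

definition codilation :: "('o, 'm, 'x) scat_scheme \<Rightarrow> 'm \<Rightarrow> 'o \<Rightarrow> 'm \<Rightarrow> 'm \<Rightarrow> bool" where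
  "codilation C f T t1 t2 \<longleftrightarrow> t1 \<in> hom C (Dom C f) T \<and> t2 \<in> hom C (Cod C f) T \<and>
     isometry C t1 \<and> isometry C t2 \<and> Cmp C (Adj C t2) t1 = f"

definition codilator :: "('o, 'm, 'x) scat_scheme \<Rightarrow> 'm \<Rightarrow> 'o \<Rightarrow> 'm \<Rightarrow> 'm \<Rightarrow> bool" where
  "codilator C f S s1 s2 \<longleftrightarrow> codilation C f S s1 s2 \<and>
     (\<forall>T t1 t2. codilation C f T t1 t2 \<longrightarrow>
        (\<exists>!t. t \<in> hom C S T \<and> isometry C t \<and> Cmp C t s1 = t1 \<and> Cmp C t s2 = t2))"

end

theory Submission
  imports Defs
begin

text \<open>
  Everything is computed componentwise in \<open>B = (X \<ominus> A) \<oplus> A \<oplus> (Y \<ominus> A)\<close>.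
  Because diagonals are kernels, a morphism with zero kernel is monic; applied to the column
  \<open>[s\<^sup>*; s\<^sup>\<perp>\<^sup>*]\<close> this makes \<open>s\<close> and \<open>s\<^sup>\<perp>\<close> jointly epic. Hence \<open>u\<close> is an isometry with
  \<open>u s = \<iota>\<^sub>1\<close> and \<open>u s\<^sup>\<perp> = \<iota>\<^sub>0\<close> (likewise for \<open>v\<close>), a cocone \<open>(a, b)\<close> under \<open>(s, t)\<close> factors
  uniquely through the cotuple \<open>[a s\<^sup>\<perp>, a s, b t\<^sup>\<perp>]\<close>, and \<open>v\<^sup>* u = t s\<^sup>*\<close>.

  For a codilation \<open>(T, t\<^sub>1, t\<^sub>2)\<close> of \<open>t s\<^sup>*\<close>, the isometry \<open>x = t\<^sub>1 s\<close> has isometric component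
  \<open>t\<^sub>2\<^sup>* x = t\<close>. Its other component \<open>y\<close> in \<open>Y \<oplus> (T \<ominus> Y)\<close> satisfies \<open>1 + y\<^sup>* y = 1\<close>;
  the shear map of \<open>A \<oplus> A\<close> has zero kernel, so this cancels to \<open>y\<^sup>* y = 0\<close>, and \<open>y = 0\<close>
  because \<open>y\<close> factors through an isometric kernel of \<open>y\<^sup>*\<close>. Thus \<open>t\<^sub>1 s = t\<^sub>2 t\<close>, the pushout
  provides the unique mediating map \<open>w\<close>, and \<open>w\<close> is an isometry since \<open>w\<^sup>*\<close> maps \<open>t\<^sub>1, t\<^sub>2\<close>
  back to \<open>u, v\<close>.
\<close>

locale pre_hilbert =
  fixes C :: "('o, 'm) scat"
  assumes pre_hilbert: "pre_hilbert_star_category C"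
begin

abbreviation cmp (infixl "\<cdot>" 55) where "g \<cdot> f \<equiv> Cmp C g f"
abbreviation adj where "adj f \<equiv> Adj C f"
abbreviation dom where "dom f \<equiv> Dom C f"
abbreviation cod where "cod f \<equiv> Cod C f"

lemma category: "category C"
  using pre_hilbert unfolding pre_hilbert_star_category_def star_category_def by blast

lemma star_category: "star_category C"
  using pre_hilbert unfolding pre_hilbert_star_category_def by blast

lemma hom_iff: "f \<in> hom C X Y \<longleftrightarrow> dom f = X \<and> cod f = Y"
  unfolding hom_def by simp

lemma dom_cmp [simp]: "cod f = dom g \<Longrightarrow> dom (g \<cdot> f) = dom f"
  and cod_cmp [simp]: "cod f = dom g \<Longrightarrow> cod (g \<cdot> f) = cod g"
  using category unfolding category_def by blast+

lemma cmp_assoc [simp]: "cod f = dom g \<Longrightarrow> cod g = dom h \<Longrightarrow> h \<cdot> (g \<cdot> f) = h \<cdot> g \<cdot> f"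
  using category unfolding category_def by blast

text \<open>The simplifier keeps composites left-associated; \<open>reassoc\<close> turns an equation
  \<open>g \<cdot> f = h\<close> into a rewrite rule that still applies inside longer composites.\<close>

lemma reassoc: "g \<cdot> f = h \<Longrightarrow> cod f = dom g \<Longrightarrow> cod g = dom x \<Longrightarrow> x \<cdot> g \<cdot> f = x \<cdot> h"
  by (metis cmp_assoc)

lemma dom_id [simp]: "dom (Id C X) = X"
  and cod_id [simp]: "cod (Id C X) = X"
  using category unfolding category_def hom_def by blast+

lemma cmp_id_right [simp]: "dom f = X \<Longrightarrow> f \<cdot> Id C X = f"
  and cmp_id_left [simp]: "cod f = X \<Longrightarrow> Id C X \<cdot> f = f"
  using category unfolding category_def by blast+

lemma dom_adj [simp]: "dom (adj f) = cod f"
  and cod_adj [simp]: "cod (adj f) = dom f"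
  and adj_adj [simp]: "adj (adj f) = f"
  and adj_id [simp]: "adj (Id C X) = Id C X"
  using star_category unfolding star_category_def hom_def by blast+

lemma adj_cmp [simp]: "cod f = dom g \<Longrightarrow> adj (g \<cdot> f) = adj f \<cdot> adj g"
  using star_category unfolding star_category_def by blast

lemma adj_cmp_eq: "g \<cdot> f = h \<Longrightarrow> cod f = dom g \<Longrightarrow> adj f \<cdot> adj g = adj h"
  by (metis adj_cmp)

lemma isometry_adj_cmp_self [simp]: "isometry C f \<Longrightarrow> adj f \<cdot> f = Id C (dom f)"
  unfolding isometry_def .

lemma isometry_cancel [simp]: "isometry C f \<Longrightarrow> dom g = dom f \<Longrightarrow> g \<cdot> adj f \<cdot> f = g"
  by (metis cmp_assoc cmp_id_right cod_adj dom_adj isometry_adj_cmp_self)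

lemma isometry_cmp:
  assumes "isometry C f" "isometry C g" "cod f = dom g"
  shows "isometry C (g \<cdot> f)"
  using assms unfolding isometry_def[of C "g \<cdot> f"] by simp

subsection \<open>Zero morphisms\<close>

lemma zero_obj_into_unique:
  assumes "zero_obj C Z" "dom x = dom y" "cod x = Z" "cod y = Z"
  shows "x = y"
proof -
  have "\<exists>!f. f \<in> hom C (dom x) Z"
    using assms(1) unfolding zero_obj_def by blast
  moreover have "x \<in> hom C (dom x) Z" "y \<in> hom C (dom x) Z"
    using assms(2-4) by (simp_all add: hom_iff)
  ultimately show ?thesis
    by blast
qed

lemma zero_obj_from_unique:
  assumes "zero_obj C Z" "dom x = Z" "dom y = Z" "cod x = cod y"
  shows "x = y"
proof -
  have "\<exists>!f. f \<in> hom C Z (cod x)"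
    using assms(1) unfolding zero_obj_def by blast
  moreover have "x \<in> hom C Z (cod x)" "y \<in> hom C Z (cod x)"
    using assms(2-4) by (simp_all add: hom_iff)
  ultimately show ?thesis
    by blast
qed

lemma zero_morI: "zero_obj C Z \<Longrightarrow> cod a = Z \<Longrightarrow> dom b = Z \<Longrightarrow> zero_mor C (b \<cdot> a)"
  unfolding zero_mor_def hom_iff by auto

lemma zero_morE:
  assumes "zero_mor C f"
  obtains Z a b where "zero_obj C Z" "cod a = Z" "dom b = Z" "f = b \<cdot> a"
proof -
  from assms obtain Z a b where "zero_obj C Z" "a \<in> hom C (dom f) Z" "b \<in> hom C Z (cod f)"
    and "f = b \<cdot> a"
    unfolding zero_mor_def by blast
  then show thesis
    by (intro that[of Z a b]) (simp_all add: hom_iff)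
qed

lemma zero_mor_eq:
  assumes "zero_mor C f" "zero_mor C g" "dom f = dom g" "cod f = cod g"
  shows "f = g"
proof -
  obtain Z a b where Z: "zero_obj C Z" "cod a = Z" "dom b = Z" and f: "f = b \<cdot> a"
    using assms(1) by (rule zero_morE)
  obtain Z' a' b' where Z': "zero_obj C Z'" "cod a' = Z'" "dom b' = Z'" and g: "g = b' \<cdot> a'"
    using assms(2) by (rule zero_morE)
  obtain i where i: "dom i = Z" "cod i = Z'"
    using Z(1) unfolding zero_obj_def hom_iff by blast
  have "a' = i \<cdot> a"
    by (rule zero_obj_into_unique[OF Z'(1)]) (use assms(3) f g Z Z' i in simp_all)
  moreover have "b = b' \<cdot> i"
    by (rule zero_obj_from_unique[OF Z(1)]) (use assms(4) f g Z Z' i in simp_all)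
  ultimately show ?thesis
    using f g Z Z' i by simp
qed

lemma zero_mor_cmp_left [simp]:
  assumes "zero_mor C f" "cod f = dom g"
  shows "zero_mor C (g \<cdot> f)"
proof -
  obtain Z a b where "zero_obj C Z" "cod a = Z" "dom b = Z" "f = b \<cdot> a"
    using assms(1) by (rule zero_morE)
  with assms(2) show ?thesis
    using zero_morI[of Z a "g \<cdot> b"] by simp
qed

lemma zero_mor_cmp_right [simp]:
  assumes "zero_mor C f" "cod g = dom f"
  shows "zero_mor C (f \<cdot> g)"
proof -
  obtain Z a b where "zero_obj C Z" "cod a = Z" "dom b = Z" "f = b \<cdot> a"
    using assms(1) by (rule zero_morE)
  with assms(2) show ?thesis
    using zero_morI[of Z "a \<cdot> g" b] by simp
qed

lemma zero_mor_cmp_left_assoc [simp]: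
  assumes "zero_mor C (g \<cdot> f)" "cod f = dom g" "cod g = dom h"
  shows "zero_mor C (h \<cdot> g \<cdot> f)"
  using zero_mor_cmp_left[OF assms(1)] assms(2,3) by simp

lemma zero_mor_adj [simp]: "zero_mor C (adj f) \<longleftrightarrow> zero_mor C f"
proof -
  have "zero_mor C (adj f)" if f: "zero_mor C f" for f
  proof -
    obtain Z a b where "zero_obj C Z" "cod a = Z" "dom b = Z" "f = b \<cdot> a"
      using f by (rule zero_morE)
    then show ?thesis
      using zero_morI[of Z "adj b" "adj a"] by simp
  qed
  then show ?thesis
    by (metis adj_adj)
qed

subsection \<open>Orthonormal biproducts\<close>

lemma orth_biproduct_inj:
  assumes "orth_biproduct C I F B \<iota>" "k \<in> I"
  shows "dom (\<iota> k) = F k" "cod (\<iota> k) = B" "isometry C (\<iota> k)"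
proof -
  from assms(1) have "\<forall>k\<in>I. \<iota> k \<in> hom C (F k) B \<and> isometry C (\<iota> k)"
    unfolding orth_biproduct_def by (elim conjE)
  with assms(2) show "dom (\<iota> k) = F k" "cod (\<iota> k) = B" "isometry C (\<iota> k)"
    by (simp_all add: hom_iff)
qed

lemma orth_biproduct_orth:
  assumes "orth_biproduct C I F B \<iota>" "j \<in> I" "k \<in> I" "j \<noteq> k"
  shows "zero_mor C (adj (\<iota> j) \<cdot> \<iota> k)"
proof -
  from assms(1) have "\<forall>j\<in>I. \<forall>k\<in>I. j \<noteq> k \<longrightarrow> zero_mor C (adj (\<iota> j) \<cdot> \<iota> k)"
    unfolding orth_biproduct_def by (elim conjE)
  with assms(2-4) show ?thesis
    by blast
qed

lemma orth_biproduct_product: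
  assumes "orth_biproduct C I F B \<iota>" "\<forall>k\<in>I. f k \<in> hom C W (F k)"
  shows "\<exists>!h. h \<in> hom C W B \<and> (\<forall>k\<in>I. adj (\<iota> k) \<cdot> h = f k)"
proof -
  from assms(1) have "\<forall>W f. (\<forall>k\<in>I. f k \<in> hom C W (F k)) \<longrightarrow>
      (\<exists>!h. h \<in> hom C W B \<and> (\<forall>k\<in>I. adj (\<iota> k) \<cdot> h = f k))"
    unfolding orth_biproduct_def by (elim conjE)
  from this[rule_format, OF assms(2)[rule_format]] show ?thesis .
qed

lemma orth_biproduct_coproduct:
  assumes "orth_biproduct C I F B \<iota>" "\<forall>k\<in>I. f k \<in> hom C (F k) W"
  shows "\<exists>!h. h \<in> hom C B W \<and> (\<forall>k\<in>I. h \<cdot> \<iota> k = f k)"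
proof -
  from assms(1) have "\<forall>W f. (\<forall>k\<in>I. f k \<in> hom C (F k) W) \<longrightarrow>
      (\<exists>!h. h \<in> hom C B W \<and> (\<forall>k\<in>I. h \<cdot> \<iota> k = f k))"
    unfolding orth_biproduct_def by (elim conjE)
  from this[rule_format, OF assms(2)[rule_format]] show ?thesis .
qed

lemma orth_biproduct_tuple:
  assumes "orth_biproduct C I F B \<iota>" "\<And>k. k \<in> I \<Longrightarrow> dom (f k) = W \<and> cod (f k) = F k"
  shows "\<exists>h. dom h = W \<and> cod h = B \<and> (\<forall>k\<in>I. adj (\<iota> k) \<cdot> h = f k)"
proof -
  have "\<forall>k\<in>I. f k \<in> hom C W (F k)"
    using assms(2) by (simp add: hom_iff)
  from ex1_implies_ex[OF orth_biproduct_product[OF assms(1) this]] show ?thesis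
    by (simp add: hom_iff)
qed

lemma orth_biproduct_cotuple:
  assumes "orth_biproduct C I F B \<iota>" "\<And>k. k \<in> I \<Longrightarrow> dom (f k) = F k \<and> cod (f k) = W"
  shows "\<exists>h. dom h = B \<and> cod h = W \<and> (\<forall>k\<in>I. h \<cdot> \<iota> k = f k)"
proof -
  have "\<forall>k\<in>I. f k \<in> hom C (F k) W"
    using assms(2) by (simp add: hom_iff)
  from ex1_implies_ex[OF orth_biproduct_coproduct[OF assms(1) this]] show ?thesis
    by (simp add: hom_iff)
qed

lemma orth_biproduct_eq_by_proj:
  assumes bp: "orth_biproduct C I F B \<iota>"
    and "dom h = W" "cod h = B" "dom h' = W" "cod h' = B"
    and "\<And>k. k \<in> I \<Longrightarrow> adj (\<iota> k) \<cdot> h = adj (\<iota> k) \<cdot> h'"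
  shows "h = h'"
proof -
  have "\<forall>k\<in>I. adj (\<iota> k) \<cdot> h \<in> hom C W (F k)"
    using assms(2,3) orth_biproduct_inj[OF bp] by (simp add: hom_iff)
  then have ex1: "\<exists>!x. x \<in> hom C W B \<and> (\<forall>k\<in>I. adj (\<iota> k) \<cdot> x = adj (\<iota> k) \<cdot> h)"
    by (rule orth_biproduct_product[OF bp])
  have P: "h \<in> hom C W B \<and> (\<forall>k\<in>I. adj (\<iota> k) \<cdot> h = adj (\<iota> k) \<cdot> h)" "h' \<in> hom C W B \<and> (\<forall>k\<in>I. adj (\<iota> k) \<cdot> h' = adj (\<iota> k) \<cdot> h)"
    using assms(2-6) by (simp_all add: hom_iff)
  show ?thesis
    using the1_equality[OF ex1 P(1)] the1_equality[OF ex1 P(2)] by simp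
qed

lemma orth_biproduct_eq_by_inj:
  assumes bp: "orth_biproduct C I F B \<iota>"
    and "dom h = B" "cod h = W" "dom h' = B" "cod h' = W"
    and "\<And>k. k \<in> I \<Longrightarrow> h \<cdot> \<iota> k = h' \<cdot> \<iota> k"
  shows "h = h'"
proof -
  have "\<forall>k\<in>I. h \<cdot> \<iota> k \<in> hom C (F k) W"
    using assms(2,3) orth_biproduct_inj[OF bp] by (simp add: hom_iff)
  then have ex1: "\<exists>!x. x \<in> hom C B W \<and> (\<forall>k\<in>I. x \<cdot> \<iota> k = h \<cdot> \<iota> k)"
    by (rule orth_biproduct_coproduct[OF bp])
  have P: "h \<in> hom C B W \<and> (\<forall>k\<in>I. h \<cdot> \<iota> k = h \<cdot> \<iota> k)" "h' \<in> hom C B W \<and> (\<forall>k\<in>I. h' \<cdot> \<iota> k = h \<cdot> \<iota> k)"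
    using assms(2-6) by (simp_all add: hom_iff)
  show ?thesis
    using the1_equality[OF ex1 P(1)] the1_equality[OF ex1 P(2)] by simp
qed

lemma orth_biproduct_pair_tuple:
  assumes "orth_biproduct C {0::nat, 1} F B \<iota>"
    and "dom a = W" "cod a = F 0" "dom b = W" "cod b = F 1"
  obtains h where "dom h = W" "cod h = B" "adj (\<iota> 0) \<cdot> h = a" "adj (\<iota> 1) \<cdot> h = b"
proof -
  have "\<And>k. k \<in> {0, 1} \<Longrightarrow> dom (if k = 0 then a else b) = W \<and> cod (if k = 0 then a else b) = F k"
    using assms(2-5) by auto
  from orth_biproduct_tuple[OF assms(1) this] obtain h where "dom h = W" "cod h = B" "\<forall>k\<in>{0, 1}. adj (\<iota> k) \<cdot> h = (if k = 0 then a else b)"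
    by blast
  then show thesis
    using that[of h] by simp
qed

lemma orth_biproduct_pair_cotuple:
  assumes "orth_biproduct C {0::nat, 1} F B \<iota>"
    and "dom a = F 0" "cod a = W" "dom b = F 1" "cod b = W"
  obtains h where "dom h = B" "cod h = W" "h \<cdot> \<iota> 0 = a" "h \<cdot> \<iota> 1 = b"
proof -
  have "\<And>k. k \<in> {0, 1} \<Longrightarrow> dom (if k = 0 then a else b) = F k \<and> cod (if k = 0 then a else b) = W"
    using assms(2-5) by auto
  from orth_biproduct_cotuple[OF assms(1) this] obtain h where "dom h = B" "cod h = W" "\<forall>k\<in>{0, 1}. h \<cdot> \<iota> k = (if k = 0 then a else b)"
    by blast
  then show thesis
    using that[of h] by simp
qed

lemma orth_biproduct_pair_eq_by_proj:
  assumes "orth_biproduct C {0::nat, 1} F B \<iota>"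
    and "dom h = W" "cod h = B" "dom h' = W" "cod h' = B"
    and "adj (\<iota> 0) \<cdot> h = adj (\<iota> 0) \<cdot> h'" "adj (\<iota> 1) \<cdot> h = adj (\<iota> 1) \<cdot> h'"
  shows "h = h'"
  by (rule orth_biproduct_eq_by_proj[OF assms(1-5)]) (use assms(6,7) in auto)

lemma orth_biproduct_pair_eq_by_inj:
  assumes "orth_biproduct C {0::nat, 1} F B \<iota>"
    and "dom h = B" "cod h = W" "dom h' = B" "cod h' = W"
    and "h \<cdot> \<iota> 0 = h' \<cdot> \<iota> 0" "h \<cdot> \<iota> 1 = h' \<cdot> \<iota> 1"
  shows "h = h'"
  by (rule orth_biproduct_eq_by_inj[OF assms(1-5)]) (use assms(6,7) in auto)

lemma orth_biproduct_pair_map: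
  assumes bpF: "orth_biproduct C {0::nat, 1} F S \<kappa>" and bpG: "orth_biproduct C {0::nat, 1} G D e"
    and f: "dom f0 = F 0" "cod f0 = G 0" "dom f1 = F 1" "cod f1 = G 1"
  obtains L where "dom L = S" "cod L = D"
    "adj (e 0) \<cdot> L = f0 \<cdot> adj (\<kappa> 0)" "adj (e 1) \<cdot> L = f1 \<cdot> adj (\<kappa> 1)"
    "L \<cdot> \<kappa> 0 = e 0 \<cdot> f0" "L \<cdot> \<kappa> 1 = e 1 \<cdot> f1"
proof -
  have \<kappa>: "dom (\<kappa> 0) = F 0" "cod (\<kappa> 0) = S" "isometry C (\<kappa> 0)"
    "dom (\<kappa> 1) = F 1" "cod (\<kappa> 1) = S" "isometry C (\<kappa> 1)"
    using orth_biproduct_inj[OF bpF] by simp_all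
  have e: "dom (e 0) = G 0" "cod (e 0) = D" "isometry C (e 0)"
    "dom (e 1) = G 1" "cod (e 1) = D" "isometry C (e 1)"
    using orth_biproduct_inj[OF bpG] by simp_all
  have orth: "zero_mor C (adj (\<kappa> 1) \<cdot> \<kappa> 0)" "zero_mor C (adj (\<kappa> 0) \<cdot> \<kappa> 1)"
    "zero_mor C (adj (e 1) \<cdot> e 0)" "zero_mor C (adj (e 0) \<cdot> e 1)"
    using orth_biproduct_orth[OF bpF] orth_biproduct_orth[OF bpG] by simp_all
  obtain L where L: "dom L = S" "cod L = D"
    "adj (e 0) \<cdot> L = f0 \<cdot> adj (\<kappa> 0)" "adj (e 1) \<cdot> L = f1 \<cdot> adj (\<kappa> 1)"
    using orth_biproduct_pair_tuple[OF bpG, of "f0 \<cdot> adj (\<kappa> 0)" S "f1 \<cdot> adj (\<kappa> 1)"] f \<kappa> by auto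
  have "L \<cdot> \<kappa> 0 = e 0 \<cdot> f0"
    by (rule orth_biproduct_pair_eq_by_proj[OF bpG])
      (use L f \<kappa> e orth in \<open>simp_all add: zero_mor_eq\<close>)
  moreover have "L \<cdot> \<kappa> 1 = e 1 \<cdot> f1"
    by (rule orth_biproduct_pair_eq_by_proj[OF bpG])
      (use L f \<kappa> e orth in \<open>simp_all add: zero_mor_eq\<close>)
  ultimately show thesis
    using that L by blast
qed

subsection \<open>Kernels\<close>

lemma ex_orth_biproduct_pair:
  "\<exists>D (e :: nat \<Rightarrow> 'm). orth_biproduct C {0, 1} (\<lambda>k. if k = 0 then X1 else X2) D e"
  using pre_hilbert unfolding pre_hilbert_star_category_def by blast

lemma ex_isometric_kernel: "\<exists>k. kernel C k f \<and> isometry C k"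
  using pre_hilbert unfolding pre_hilbert_star_category_def by blast

lemma diagonal_is_kernel:
  assumes "orth_biproduct C {0, 1} (\<lambda>_. X) D (e :: nat \<Rightarrow> 'm)" "dom d = X" "cod d = D"
    and "adj (e 0) \<cdot> d = Id C X" "adj (e 1) \<cdot> d = Id C X"
  shows "\<exists>g. kernel C d g"
proof -
  have "d \<in> hom C X D"
    using assms(2,3) by (simp add: hom_iff)
  with pre_hilbert assms(1,4,5) show ?thesis
    unfolding pre_hilbert_star_category_def by blast
qed

lemma kernel_factor:
  assumes "kernel C k f" "cod g = dom f" "zero_mor C (f \<cdot> g)"
  shows "\<exists>c. cod c = dom k \<and> k \<cdot> c = g"
  using assms unfolding kernel_def by blast

lemma zero_mor_adj_cmp_self [simp]: "zero_mor C (adj y \<cdot> y) \<longleftrightarrow> zero_mor C y"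
proof
  assume zero: "zero_mor C (adj y \<cdot> y)"
  obtain k where k: "kernel C k (adj y)" "isometry C k"
    using ex_isometric_kernel by blast
  obtain c where c: "cod c = dom k" "k \<cdot> c = y"
    using kernel_factor[OF k(1) _ zero] by auto
  have "adj y \<cdot> k = adj c"
    using c k(2) by (auto simp flip: c(2))
  moreover have "zero_mor C (adj y \<cdot> k)"
    using k(1) unfolding kernel_def by simp
  ultimately have "zero_mor C c"
    by simp
  then show "zero_mor C y"
    using c by auto
qed simp

text \<open>The diagonal of \<open>W \<oplus> W\<close> being a kernel is what makes a morphism with zero kernel
  monic: two morphisms equalized by \<open>m\<close> pair, after taking adjoints, into a map that factors
  through the diagonal.\<close>

lemma monic_if_reflects_zero:
  assumes reflects: "\<And>h. cod h = dom m \<Longrightarrow> zero_mor C (m \<cdot> h) \<Longrightarrow> zero_mor C h"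
    and f: "cod f = dom m" and g: "cod g = dom m" "dom g = dom f" and eq: "m \<cdot> f = m \<cdot> g"
  shows "f = g"
proof -
  define W where "W = dom f"
  obtain D and e :: "nat \<Rightarrow> 'm" where bp: "orth_biproduct C {0, 1} (\<lambda>_. W) D e"
    using ex_orth_biproduct_pair[of W W] by auto
  have e: "dom (e 0) = W" "cod (e 0) = D" "dom (e 1) = W" "cod (e 1) = D"
    using orth_biproduct_inj[OF bp] by simp_all
  obtain \<Delta> where \<Delta>: "dom \<Delta> = W" "cod \<Delta> = D" "adj (e 0) \<cdot> \<Delta> = Id C W" "adj (e 1) \<cdot> \<Delta> = Id C W"
    using orth_biproduct_pair_tuple[OF bp, of "Id C W" W "Id C W"] by auto
  obtain d where d: "kernel C \<Delta> d"
    using diagonal_is_kernel[OF bp \<Delta>] by blast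
  have d': "dom d = D" "zero_mor C (d \<cdot> \<Delta>)"
    using d \<Delta> unfolding kernel_def by auto
  obtain P where P: "dom P = dom m" "cod P = D" "adj (e 0) \<cdot> P = adj f" "adj (e 1) \<cdot> P = adj g"
    using orth_biproduct_pair_tuple[OF bp, of "adj f" "dom m" "adj g"] f g W_def by auto
  have fg: "adj f \<cdot> adj m = adj g \<cdot> adj m"
    using arg_cong[OF eq, of adj] f g by simp
  have P_diag: "P \<cdot> adj m = \<Delta> \<cdot> adj f \<cdot> adj m"
    by (rule orth_biproduct_pair_eq_by_proj[OF bp]) (use e P \<Delta> f g fg W_def in simp_all)
  have "d \<cdot> P \<cdot> adj m = d \<cdot> (P \<cdot> adj m)"
    using d' P by simp
  also have "\<dots> = d \<cdot> \<Delta> \<cdot> (adj f \<cdot> adj m)"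
    using d' \<Delta> f W_def by (simp add: P_diag)
  also have "zero_mor C \<dots>"
    using d' \<Delta> f W_def by simp
  finally have "zero_mor C (adj (d \<cdot> P \<cdot> adj m))"
    by simp
  then have "zero_mor C (m \<cdot> adj (d \<cdot> P))"
    using d' P by simp
  then have "zero_mor C (adj (d \<cdot> P))"
    using reflects[of "adj (d \<cdot> P)"] d' P by simp
  then have "zero_mor C (d \<cdot> P)"
    by simp
  then obtain c where c: "cod c = W" "\<Delta> \<cdot> c = P"
    using kernel_factor[OF d] d' P \<Delta> by auto
  have "adj f = adj (e 0) \<cdot> (\<Delta> \<cdot> c)" "adj g = adj (e 1) \<cdot> (\<Delta> \<cdot> c)"
    using P c(2) by simp_all
  then have "adj f = c" "adj g = c"
    using \<Delta> c(1) e by simp_all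
  then show ?thesis
    by (metis adj_adj)
qed

subsection \<open>Orthogonal complements\<close>

lemma iso_orth_complementD:
  assumes "iso_orth_complement C a b"
  shows "isometry C b" "cod b = cod a" "zero_mor C (adj a \<cdot> b)" "zero_mor C (adj b \<cdot> a)"
proof -
  show "isometry C b" "cod b = cod a" "zero_mor C (adj a \<cdot> b)"
    using assms unfolding iso_orth_complement_def kernel_def by simp_all
  moreover have "adj (adj a \<cdot> b) = adj b \<cdot> a"
    using \<open>cod b = cod a\<close> by simp
  ultimately show "zero_mor C (adj b \<cdot> a)"
    by (metis zero_mor_adj)
qed

lemma iso_orth_complement_factor:
  assumes "iso_orth_complement C a b" "cod h = cod a" "zero_mor C (adj a \<cdot> h)"
  shows "\<exists>c. cod c = dom b \<and> b \<cdot> c = h"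
  using assms kernel_factor[of b "adj a" h] unfolding iso_orth_complement_def by simp

lemma ex_iso_orth_complement: "\<exists>b. iso_orth_complement C a b"
  using ex_isometric_kernel[of "adj a"] unfolding iso_orth_complement_def by blast

lemma iso_orth_complement_jointly_epic:
  assumes b: "iso_orth_complement C a b"
    and fg: "dom f = cod a" "dom g = cod a" "cod g = cod f" "f \<cdot> a = g \<cdot> a" "f \<cdot> b = g \<cdot> b"
  shows "f = g"
proof -
  note b' = iso_orth_complementD[OF b]
  obtain D and e :: "nat \<Rightarrow> 'm"
    where bp: "orth_biproduct C {0, 1} (\<lambda>k. if k = 0 then dom a else dom b) D e"
    using ex_orth_biproduct_pair by blast
  have e: "dom (e 0) = dom a" "cod (e 0) = D" "dom (e 1) = dom b" "cod (e 1) = D"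
    using orth_biproduct_inj[OF bp] by simp_all
  obtain P where P: "dom P = cod a" "cod P = D" "adj (e 0) \<cdot> P = adj a" "adj (e 1) \<cdot> P = adj b"
    using orth_biproduct_pair_tuple[OF bp, of "adj a" "cod a" "adj b"] b' by auto
  have "adj f = adj g"
  proof (rule monic_if_reflects_zero)
    fix h
    assume h: "cod h = dom P" "zero_mor C (P \<cdot> h)"
    have "zero_mor C (adj (e 0) \<cdot> (P \<cdot> h))" "zero_mor C (adj (e 1) \<cdot> (P \<cdot> h))"
      by (rule zero_mor_cmp_left; use h P e in simp)+
    then have zero: "zero_mor C (adj a \<cdot> h)" "zero_mor C (adj b \<cdot> h)"
      using P e h by simp_all
    then obtain c where c: "cod c = dom b" "b \<cdot> c = h"
      using iso_orth_complement_factor[OF b] h(1) P by auto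
    then have "adj b \<cdot> h = c"
      using b'(1) by (auto simp flip: c(2))
    with zero(2) have "zero_mor C c"
      by simp
    then show "zero_mor C h"
      using c zero_mor_cmp_left[of c b] by simp
  next
    have "adj a \<cdot> adj f = adj a \<cdot> adj g" "adj b \<cdot> adj f = adj b \<cdot> adj g"
      using adj_cmp_eq[OF fg(4)] adj_cmp_eq[OF fg(5)] fg b'(2) by simp_all
    then show "P \<cdot> adj f = P \<cdot> adj g"
      by - (rule orth_biproduct_pair_eq_by_proj[OF bp], use P e fg in simp_all)
  qed (use P fg in simp_all)
  then show ?thesis
    by (metis adj_adj)
qed

lemma orth_biproduct_column_isometry:
  assumes bp: "orth_biproduct C I F B \<iota>" and ij: "i \<in> I" "j \<in> I" "i \<noteq> j"
    and a: "isometry C a" "dom a = F i"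
    and b: "iso_orth_complement C a b" "dom b = F j"
    and u: "dom u = cod a" "cod u = B" "adj (\<iota> i) \<cdot> u = adj a" "adj (\<iota> j) \<cdot> u = adj b"
      "\<And>k. k \<in> I \<Longrightarrow> k \<noteq> i \<Longrightarrow> k \<noteq> j \<Longrightarrow> zero_mor C (adj (\<iota> k) \<cdot> u)"
  shows "u \<cdot> a = \<iota> i" "u \<cdot> b = \<iota> j" "isometry C u"
proof -
  note b' = iso_orth_complementD[OF b(1)]
  note \<iota> = orth_biproduct_inj[OF bp]
  have column: "u \<cdot> x = \<iota> l"
    if x: "l \<in> I" "isometry C x" "dom x = F l" "cod x = cod a" "adj (\<iota> l) \<cdot> u = adj x"
      and others: "\<And>k. k \<in> I \<Longrightarrow> k \<noteq> l \<Longrightarrow> zero_mor C (adj (\<iota> k) \<cdot> u \<cdot> x)" for x l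
  proof (rule orth_biproduct_eq_by_proj[OF bp])
    fix k
    assume k: "k \<in> I"
    show "adj (\<iota> k) \<cdot> (u \<cdot> x) = adj (\<iota> k) \<cdot> \<iota> l"
    proof (cases "k = l")
      case True
      then show ?thesis
        using x u \<iota> by simp
    next
      case False
      have "zero_mor C (adj (\<iota> k) \<cdot> \<iota> l)"
        using orth_biproduct_orth[OF bp k x(1) False] .
      with others[OF k False] show ?thesis
        using x u \<iota>[OF k] \<iota>[OF x(1)] by (simp add: zero_mor_eq)
    qed
  qed (use x u \<iota> in simp_all)
  show ua: "u \<cdot> a = \<iota> i"
  proof (rule column)
    fix k
    assume "k \<in> I" "k \<noteq> i"
    then show "zero_mor C (adj (\<iota> k) \<cdot> u \<cdot> a)"
      using u b' \<iota> by (cases "k = j") simp_all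
  qed (use ij a u in simp_all)
  show ub: "u \<cdot> b = \<iota> j"
  proof (rule column)
    fix k
    assume "k \<in> I" "k \<noteq> j"
    then show "zero_mor C (adj (\<iota> k) \<cdot> u \<cdot> b)"
      using u b' \<iota> by (cases "k = i") simp_all
  qed (use ij b' b(2) u in simp_all)
  have "adj u \<cdot> \<iota> i = a" "adj u \<cdot> \<iota> j = b"
    using adj_cmp_eq[OF u(3)] adj_cmp_eq[OF u(4)] u \<iota> ij by simp_all
  then have "adj u \<cdot> u \<cdot> a = a" "adj u \<cdot> u \<cdot> b = b"
    using reassoc[OF ua, of "adj u"] reassoc[OF ub, of "adj u"] u b'(2) by simp_all
  then have "adj u \<cdot> u = Id C (cod a)"
    by - (rule iso_orth_complement_jointly_epic[OF b(1)], use u b' in simp_all)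
  then show "isometry C u"
    unfolding isometry_def using u by simp
qed

subsection \<open>Isometries with an isometric component\<close>

text \<open>The shear map \<open>[e\<^sub>0\<^sup>*; \<Sigma>]\<close> of \<open>A \<oplus> A\<close> has zero kernel, hence is monic.\<close>

lemma orth_biproduct_eq_by_fst_codiagonal:
  assumes bp: "orth_biproduct C {0, 1} (\<lambda>_. A) D (e :: nat \<Rightarrow> 'm)"
    and \<Sigma>: "dom \<Sigma> = D" "cod \<Sigma> = A" "\<Sigma> \<cdot> e 0 = Id C A" "\<Sigma> \<cdot> e 1 = Id C A"
    and h: "dom h = dom h'" "cod h = D" "cod h' = D"
    and eq: "adj (e 0) \<cdot> h = adj (e 0) \<cdot> h'" "\<Sigma> \<cdot> h = \<Sigma> \<cdot> h'"
  shows "h = h'"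
proof -
  have e: "dom (e 0) = A" "cod (e 0) = D" "isometry C (e 0)"
    "dom (e 1) = A" "cod (e 1) = D" "isometry C (e 1)"
    using orth_biproduct_inj[OF bp] by simp_all
  have orth: "zero_mor C (adj (e 0) \<cdot> e 1)"
    using orth_biproduct_orth[OF bp] by simp
  obtain S where S: "dom S = D" "cod S = D" "adj (e 0) \<cdot> S = adj (e 0)" "adj (e 1) \<cdot> S = \<Sigma>"
    using orth_biproduct_pair_tuple[OF bp, of "adj (e 0)" D \<Sigma>] e \<Sigma> by auto
  show ?thesis
  proof (rule monic_if_reflects_zero)
    fix k
    assume k: "cod k = dom S" "zero_mor C (S \<cdot> k)"
    have "zero_mor C (adj (e 0) \<cdot> (S \<cdot> k))" "zero_mor C (adj (e 1) \<cdot> (S \<cdot> k))"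
      by (rule zero_mor_cmp_left; use k S e in simp)+
    then have zero: "zero_mor C (adj (e 0) \<cdot> k)" "zero_mor C (\<Sigma> \<cdot> k)"
      using k S e by simp_all
    have "k = e 1 \<cdot> (adj (e 1) \<cdot> k)"
      by (rule orth_biproduct_pair_eq_by_proj[OF bp])
        (use zero(1) orth k S e in \<open>simp_all add: zero_mor_eq\<close>)
    moreover have "\<Sigma> \<cdot> k = adj (e 1) \<cdot> k"
      using \<Sigma> e k S by (subst (1) \<open>k = e 1 \<cdot> (adj (e 1) \<cdot> k)\<close>) simp
    moreover have "zero_mor C (e 1 \<cdot> (adj (e 1) \<cdot> k))"
      by (rule zero_mor_cmp_left) (use zero(2) \<open>\<Sigma> \<cdot> k = adj (e 1) \<cdot> k\<close> e k S in simp_all)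
    ultimately show "zero_mor C k"
      by simp
  next
    show "S \<cdot> h = S \<cdot> h'"
      by (rule orth_biproduct_pair_eq_by_proj[OF bp]) (use eq S e h in simp_all)
  qed (use S h in simp_all)
qed

text \<open>With \<open>t = \<kappa>\<^sub>0\<^sup>* z\<close> and \<open>y = \<kappa>\<^sub>1\<^sup>* z\<close>, the map \<open>H = (t\<^sup>* \<oplus> y\<^sup>*) z = [t\<^sup>* t; y\<^sup>* y]\<close> into
  \<open>A \<oplus> A\<close> has first component \<open>1\<close> and codiagonal sum \<open>z\<^sup>* z = 1\<close>, just like \<open>e\<^sub>0\<close>;
  so \<open>H = e\<^sub>0\<close> and \<open>y\<^sup>* y = e\<^sub>1\<^sup>* e\<^sub>0 = 0\<close>.\<close>

lemma orth_biproduct_isometry_snd_zero: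
  assumes bp: "orth_biproduct C {0::nat, 1} G S \<kappa>"
    and z: "isometry C z" "cod z = S" and t: "isometry C (adj (\<kappa> 0) \<cdot> z)"
  shows "zero_mor C (adj (\<kappa> 1) \<cdot> z)"
proof -
  define A where "A = dom z"
  define t where "t = adj (\<kappa> 0) \<cdot> z"
  define y where "y = adj (\<kappa> 1) \<cdot> z"
  have \<kappa>: "dom (\<kappa> 0) = G 0" "cod (\<kappa> 0) = S" "dom (\<kappa> 1) = G 1" "cod (\<kappa> 1) = S"
    using orth_biproduct_inj[OF bp] by simp_all
  have ty: "dom t = A" "cod t = G 0" "dom y = A" "cod y = G 1" "isometry C t"
    unfolding t_def y_def A_def using z t \<kappa> by simp_all
  have adj_ty: "adj t = adj z \<cdot> \<kappa> 0" "adj y = adj z \<cdot> \<kappa> 1"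
    unfolding t_def y_def using z \<kappa> by simp_all
  obtain D and e :: "nat \<Rightarrow> 'm" where bpD: "orth_biproduct C {0, 1} (\<lambda>_. A) D e"
    using ex_orth_biproduct_pair[of A A] by auto
  have e: "dom (e 0) = A" "cod (e 0) = D" "isometry C (e 0)"
    "dom (e 1) = A" "cod (e 1) = D" "isometry C (e 1)"
    using orth_biproduct_inj[OF bpD] by simp_all
  obtain \<Sigma> where \<Sigma>: "dom \<Sigma> = D" "cod \<Sigma> = A" "\<Sigma> \<cdot> e 0 = Id C A" "\<Sigma> \<cdot> e 1 = Id C A"
    using orth_biproduct_pair_cotuple[OF bpD, of "Id C A" A "Id C A"] by auto
  have "orth_biproduct C {0, 1} (\<lambda>k. if k = 0 then A else A) D e"
    using bpD by simp
  then obtain L where L: "dom L = S" "cod L = D"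
    "adj (e 0) \<cdot> L = adj t \<cdot> adj (\<kappa> 0)" "adj (e 1) \<cdot> L = adj y \<cdot> adj (\<kappa> 1)"
    "L \<cdot> \<kappa> 0 = e 0 \<cdot> adj t" "L \<cdot> \<kappa> 1 = e 1 \<cdot> adj y"
    using orth_biproduct_pair_map[OF bp, of _ D e "adj t" "adj y"] ty by auto
  have \<Sigma>L: "\<Sigma> \<cdot> L = adj z"
  proof (rule orth_biproduct_pair_eq_by_inj[OF bp])
    show "\<Sigma> \<cdot> L \<cdot> \<kappa> 0 = adj z \<cdot> \<kappa> 0" "\<Sigma> \<cdot> L \<cdot> \<kappa> 1 = adj z \<cdot> \<kappa> 1"
      using \<Sigma> e ty \<kappa> L z A_def reassoc[OF L(5)] reassoc[OF L(6)] by (simp_all add: adj_ty)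
  qed (use \<Sigma> L z A_def in simp_all)
  have "L \<cdot> z = e 0"
    using bpD \<Sigma>
  proof (rule orth_biproduct_eq_by_fst_codiagonal)
    show "adj (e 0) \<cdot> (L \<cdot> z) = adj (e 0) \<cdot> e 0"
      using L z e ty \<kappa> by (simp add: L(3) reassoc[OF t_def[symmetric]])
    show "\<Sigma> \<cdot> (L \<cdot> z) = \<Sigma> \<cdot> e 0"
      using L z e \<Sigma> A_def by (simp add: \<Sigma>L)
  qed (use L z e A_def in simp_all)
  moreover have "adj (e 1) \<cdot> (L \<cdot> z) = adj y \<cdot> y"
    using L z e ty \<kappa> reassoc[OF y_def[symmetric]] by simp
  ultimately have "adj (e 1) \<cdot> e 0 = adj y \<cdot> y"
    by simp
  moreover have "zero_mor C (adj (e 1) \<cdot> e 0)"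
    using orth_biproduct_orth[OF bpD] by simp
  ultimately show ?thesis
    unfolding y_def by simp
qed

text \<open>The column \<open>M = [s\<^sup>*; r\<^sup>*]\<close> for a complement \<open>r\<close> of \<open>s\<close> is an isometry, and \<open>M x\<close> is an
  isometry whose first component \<open>s\<^sup>* x\<close> is an isometry, so its second component vanishes.\<close>

lemma isometry_factor:
  assumes x: "isometry C x" and s: "isometry C s" "cod x = cod s"
    and t: "isometry C (adj s \<cdot> x)"
  shows "x = s \<cdot> (adj s \<cdot> x)"
proof -
  obtain r where r: "iso_orth_complement C s r"
    using ex_iso_orth_complement by blast
  note r' = iso_orth_complementD[OF r]
  obtain S and \<kappa> :: "nat \<Rightarrow> 'm"
    where bp: "orth_biproduct C {0, 1} (\<lambda>k. if k = 0 then dom s else dom r) S \<kappa>"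
    using ex_orth_biproduct_pair by blast
  have \<kappa>: "dom (\<kappa> 0) = dom s" "cod (\<kappa> 0) = S" "isometry C (\<kappa> 0)"
    "dom (\<kappa> 1) = dom r" "cod (\<kappa> 1) = S"
    using orth_biproduct_inj[OF bp] by simp_all
  obtain M where M: "dom M = cod s" "cod M = S" "adj (\<kappa> 0) \<cdot> M = adj s" "adj (\<kappa> 1) \<cdot> M = adj r"
    using orth_biproduct_pair_tuple[OF bp, of "adj s" "cod s" "adj r"] r' by auto
  have "M \<cdot> s = \<kappa> 0" "isometry C M"
    using orth_biproduct_column_isometry[OF bp _ _ _ s(1) _ r _ M] by auto
  define z where "z = M \<cdot> x"
  have z: "isometry C z" "cod z = S" "dom z = dom x"
    unfolding z_def using isometry_cmp[OF x \<open>isometry C M\<close>] s M by simp_all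
  have z0: "adj (\<kappa> 0) \<cdot> z = adj s \<cdot> x"
    unfolding z_def using M s \<kappa> by simp
  have z_factor: "z = \<kappa> 0 \<cdot> (adj s \<cdot> x)"
  proof (rule orth_biproduct_pair_eq_by_proj[OF bp])
    show "adj (\<kappa> 0) \<cdot> z = adj (\<kappa> 0) \<cdot> (\<kappa> 0 \<cdot> (adj s \<cdot> x))"
      using z0 \<kappa> s by simp
    have "zero_mor C (adj (\<kappa> 1) \<cdot> z)"
      using orth_biproduct_isometry_snd_zero[OF bp z(1,2)] t z0 by simp
    moreover have "zero_mor C (adj (\<kappa> 1) \<cdot> (\<kappa> 0 \<cdot> (adj s \<cdot> x)))"
      using orth_biproduct_orth[OF bp, of 1 0] \<kappa> s by simp
    ultimately show "adj (\<kappa> 1) \<cdot> z = adj (\<kappa> 1) \<cdot> (\<kappa> 0 \<cdot> (adj s \<cdot> x))"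
      by (rule zero_mor_eq) (use z \<kappa> s in simp_all)
  qed (use z \<kappa> s in simp_all)
  have "x = adj M \<cdot> z"
    unfolding z_def using x s M \<open>isometry C M\<close> by simp
  also have "\<dots> = adj M \<cdot> \<kappa> 0 \<cdot> (adj s \<cdot> x)"
    using M \<kappa> s by (simp add: z_factor)
  also have "adj M \<cdot> \<kappa> 0 = s"
    using adj_cmp_eq[OF M(3)] M \<kappa> by simp
  finally show ?thesis .
qed

end

subsection \<open>The codilator square\<close>

locale codilator_square = pre_hilbert C for C :: "('o, 'm) scat" +
  fixes A X Y B :: 'o and s t sp tp u v :: 'm and F :: "nat \<Rightarrow> 'o" and \<iota> :: "nat \<Rightarrow> 'm"
  assumes s: "s \<in> hom C A X" "isometry C s"
    and t: "t \<in> hom C A Y" "isometry C t"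
    and sp: "iso_orth_complement C s sp"
    and tp: "iso_orth_complement C t tp"
    and F: "F 0 = dom sp" "F 1 = A" "F 2 = dom tp"
    and bp: "orth_biproduct C {0, 1, 2} F B \<iota>"
    and u: "u \<in> hom C X B" "adj (\<iota> 0) \<cdot> u = adj sp" "adj (\<iota> 1) \<cdot> u = adj s"
      "zero_mor C (adj (\<iota> 2) \<cdot> u)"
    and v: "v \<in> hom C Y B" "zero_mor C (adj (\<iota> 0) \<cdot> v)" "adj (\<iota> 1) \<cdot> v = adj t"
      "adj (\<iota> 2) \<cdot> v = adj tp"
begin

text \<open>Keep the index \<open>1\<close> from being rewritten to \<open>Suc 0\<close>, so that the facts about \<open>\<iota> 1\<close>
  remain applicable as rewrite rules.\<close>

declare One_nat_def [simp del]

lemma dom_cod_simps [simp]: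
  "dom s = A" "cod s = X" "dom t = A" "cod t = Y" "cod sp = X" "cod tp = Y"
  "dom u = X" "cod u = B" "dom v = Y" "cod v = B"
  "dom (\<iota> 0) = dom sp" "dom (\<iota> 1) = A" "dom (\<iota> 2) = dom tp"
  "cod (\<iota> 0) = B" "cod (\<iota> 1) = B" "cod (\<iota> 2) = B"
  using s t u v iso_orth_complementD[OF sp] iso_orth_complementD[OF tp] orth_biproduct_inj[OF bp] F
  by (simp_all add: hom_iff)

lemma u_s: "u \<cdot> s = \<iota> 1" and u_sp: "u \<cdot> sp = \<iota> 0" and isometry_u: "isometry C u"
  using orth_biproduct_column_isometry[OF bp _ _ _ s(2) _ sp _ _ _ u(3) u(2)] u(4) F
  by auto

lemma v_t: "v \<cdot> t = \<iota> 1" and v_tp: "v \<cdot> tp = \<iota> 2" and isometry_v: "isometry C v"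
  using orth_biproduct_column_isometry[OF bp _ _ _ t(2) _ tp _ _ _ v(3) v(4)] v(2) F
  by auto

lemma eq_by_proj:
  assumes "dom h = W" "cod h = B" "dom h' = W" "cod h' = B"
    and "adj (\<iota> 0) \<cdot> h = adj (\<iota> 0) \<cdot> h'" "adj (\<iota> 1) \<cdot> h = adj (\<iota> 1) \<cdot> h'"
      "adj (\<iota> 2) \<cdot> h = adj (\<iota> 2) \<cdot> h'"
  shows "h = h'"
  by (rule orth_biproduct_eq_by_proj[OF bp assms(1-4)]) (use assms(5-7) in auto)

lemma eq_by_inj:
  assumes "dom h = B" "cod h = W" "dom h' = B" "cod h' = W"
    and "h \<cdot> \<iota> 0 = h' \<cdot> \<iota> 0" "h \<cdot> \<iota> 1 = h' \<cdot> \<iota> 1" "h \<cdot> \<iota> 2 = h' \<cdot> \<iota> 2"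
  shows "h = h'"
  by (rule orth_biproduct_eq_by_inj[OF bp assms(1-4)]) (use assms(5-7) in auto)

lemma \<iota>_via_u: "dom g = B \<Longrightarrow> g \<cdot> \<iota> 0 = g \<cdot> u \<cdot> sp" "dom g = B \<Longrightarrow> g \<cdot> \<iota> 1 = g \<cdot> u \<cdot> s"
  using reassoc[OF u_sp] reassoc[OF u_s] by simp_all

lemma \<iota>_via_v: "dom g = B \<Longrightarrow> g \<cdot> \<iota> 1 = g \<cdot> v \<cdot> t" "dom g = B \<Longrightarrow> g \<cdot> \<iota> 2 = g \<cdot> v \<cdot> tp"
  using reassoc[OF v_t] reassoc[OF v_tp] by simp_all

lemma pushout_factor:
  assumes ab: "dom a = X" "dom b = Y" "cod b = cod a" "a \<cdot> s = b \<cdot> t"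
  shows "\<exists>!h. h \<in> hom C B (cod a) \<and> h \<cdot> u = a \<and> h \<cdot> v = b"
proof -
  let ?f = "\<lambda>k. if k = 0 then a \<cdot> sp else if k = 1 then a \<cdot> s else b \<cdot> tp"
  have "\<And>k. k \<in> {0, 1, 2} \<Longrightarrow> dom (?f k) = F k \<and> cod (?f k) = cod a"
    using ab F by auto
  from orth_biproduct_cotuple[OF bp this] obtain h
    where "dom h = B" "cod h = cod a" "\<forall>k\<in>{0, 1, 2}. h \<cdot> \<iota> k = ?f k"
    by blast
  then have h: "dom h = B" "cod h = cod a"
    "h \<cdot> \<iota> 0 = a \<cdot> sp" "h \<cdot> \<iota> 1 = a \<cdot> s" "h \<cdot> \<iota> 2 = b \<cdot> tp"
    by simp_all
  have hu: "h \<cdot> u = a"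
    by (rule iso_orth_complement_jointly_epic[OF sp]) (use ab h \<iota>_via_u[of h] in simp_all)
  have hv: "h \<cdot> v = b"
    by (rule iso_orth_complement_jointly_epic[OF tp]) (use ab h \<iota>_via_v[of h] in simp_all)
  have unique: "h' = h" if h': "h' \<in> hom C B (cod a)" "h' \<cdot> u = a" "h' \<cdot> v = b" for h'
  proof -
    have "dom h' = B" "cod h' = cod a"
      using h'(1) by (simp_all add: hom_iff)
    moreover have "h' \<cdot> \<iota> 0 = a \<cdot> sp" "h' \<cdot> \<iota> 1 = a \<cdot> s" "h' \<cdot> \<iota> 2 = b \<cdot> tp"
      using \<iota>_via_u[of h'] \<iota>_via_v[of h'] h' calculation by simp_all
    ultimately show ?thesis
      by - (rule eq_by_inj, use h in simp_all)
  qed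
  have "h \<in> hom C B (cod a)"
    using h by (simp add: hom_iff)
  with hu hv unique show ?thesis
    by blast
qed

lemma pushout: "pushout_square C s t u v"
  unfolding pushout_square_def
proof (intro conjI allI impI)
  fix a b
  assume "dom a = cod s \<and> dom b = cod t \<and> cod a = cod b \<and> a \<cdot> s = b \<cdot> t"
  then have "dom a = X" "dom b = Y" "cod b = cod a" "a \<cdot> s = b \<cdot> t"
    by simp_all
  then show "\<exists>!h. h \<in> hom C (cod u) (cod a) \<and> h \<cdot> u = a \<and> h \<cdot> v = b"
    by (simp add: pushout_factor)
qed (simp_all add: u_s v_t)

lemma adj_v_\<iota>: "adj v \<cdot> \<iota> 1 = t" "zero_mor C (adj v \<cdot> \<iota> 0)"
  using adj_cmp_eq[OF v(3)] zero_mor_adj[of "adj (\<iota> 0) \<cdot> v"] v(2) by simp_all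

lemma codilation: "codilation C (t \<cdot> adj s) B u v"
proof -
  have "adj v \<cdot> u = t \<cdot> adj s"
  proof (rule iso_orth_complement_jointly_epic[OF sp])
    show "adj v \<cdot> u \<cdot> s = t \<cdot> adj s \<cdot> s"
      using adj_v_\<iota>(1) reassoc[OF u_s, of "adj v"] s(2) by simp
    have "zero_mor C (adj v \<cdot> u \<cdot> sp)"
      using adj_v_\<iota>(2) reassoc[OF u_sp, of "adj v"] by simp
    moreover have "zero_mor C (t \<cdot> adj s \<cdot> sp)"
      using iso_orth_complementD(3)[OF sp] by simp
    ultimately show "adj v \<cdot> u \<cdot> sp = t \<cdot> adj s \<cdot> sp"
      by (rule zero_mor_eq) simp_all
  qed simp_all
  then show ?thesis
    unfolding codilation_def using isometry_u isometry_v by (simp add: hom_iff)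
qed

lemma codilation_map_isometry:
  assumes cd: "codilation C (t \<cdot> adj s) T t1 t2"
    and w: "dom w = B" "cod w = T" "w \<cdot> u = t1" "w \<cdot> v = t2"
  shows "isometry C w"
proof -
  have t1: "dom t1 = X" "cod t1 = T" "isometry C t1"
    and t2: "dom t2 = Y" "cod t2 = T" "isometry C t2"
    and t21: "adj t2 \<cdot> t1 = t \<cdot> adj s"
    using cd unfolding codilation_def hom_iff by simp_all
  have t12: "adj t1 \<cdot> t2 = s \<cdot> adj t"
    using adj_cmp_eq[OF t21] t1 t2 by simp
  have w\<iota>: "w \<cdot> \<iota> 0 = t1 \<cdot> sp" "w \<cdot> \<iota> 1 = t1 \<cdot> s" "w \<cdot> \<iota> 2 = t2 \<cdot> tp"
    using \<iota>_via_u[of w] \<iota>_via_v[of w] w by simp_all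
  have adj_w\<iota>: "adj (\<iota> 0) \<cdot> adj w = adj sp \<cdot> adj t1" "adj (\<iota> 1) \<cdot> adj w = adj s \<cdot> adj t1"
    "adj (\<iota> 2) \<cdot> adj w = adj tp \<cdot> adj t2"
    using adj_cmp_eq[OF w\<iota>(1)] adj_cmp_eq[OF w\<iota>(2)] adj_cmp_eq[OF w\<iota>(3)] w t1 t2 by simp_all
  have zero: "zero_mor C (adj tp \<cdot> t \<cdot> adj s)" "zero_mor C (adj sp \<cdot> s \<cdot> adj t)"
    using iso_orth_complementD(4)[OF tp] iso_orth_complementD(4)[OF sp] by simp_all
  have wt1: "adj w \<cdot> t1 = u"
  proof (rule eq_by_proj)
    show "adj (\<iota> 0) \<cdot> (adj w \<cdot> t1) = adj (\<iota> 0) \<cdot> u" "adj (\<iota> 1) \<cdot> (adj w \<cdot> t1) = adj (\<iota> 1) \<cdot> u"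
      using w t1 by (simp_all add: adj_w\<iota> u(2,3))
    have "adj (\<iota> 2) \<cdot> (adj w \<cdot> t1) = adj tp \<cdot> t \<cdot> adj s"
      using w t1 t2 reassoc[OF t21, of "adj tp"] by (simp add: adj_w\<iota>)
    with zero(1) have "zero_mor C (adj (\<iota> 2) \<cdot> (adj w \<cdot> t1))"
      by simp
    from this u(4) show "adj (\<iota> 2) \<cdot> (adj w \<cdot> t1) = adj (\<iota> 2) \<cdot> u"
      by (rule zero_mor_eq) (use w t1 in simp_all)
  qed (use w t1 in simp_all)
  have wt2: "adj w \<cdot> t2 = v"
  proof (rule eq_by_proj)
    show "adj (\<iota> 1) \<cdot> (adj w \<cdot> t2) = adj (\<iota> 1) \<cdot> v" "adj (\<iota> 2) \<cdot> (adj w \<cdot> t2) = adj (\<iota> 2) \<cdot> v"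
      using w t1 t2 reassoc[OF t12, of "adj s"] s(2) by (simp_all add: adj_w\<iota> v(3,4))
    have "adj (\<iota> 0) \<cdot> (adj w \<cdot> t2) = adj sp \<cdot> s \<cdot> adj t"
      using w t1 t2 reassoc[OF t12, of "adj sp"] by (simp add: adj_w\<iota>)
    with zero(2) have "zero_mor C (adj (\<iota> 0) \<cdot> (adj w \<cdot> t2))"
      by simp
    from this v(2) show "adj (\<iota> 0) \<cdot> (adj w \<cdot> t2) = adj (\<iota> 0) \<cdot> v"
      by (rule zero_mor_eq) (use w t2 in simp_all)
  qed (use w t2 in simp_all)
  have "adj w \<cdot> w = Id C B"
    by (rule eq_by_inj)
      (use w t1 t2 wt1 wt2 u_s u_sp v_tp reassoc[OF w\<iota>(1)] reassoc[OF w\<iota>(2)] reassoc[OF w\<iota>(3)]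
        in simp_all)
  then show ?thesis
    unfolding isometry_def using w by simp
qed

lemma codilator: "codilator C (t \<cdot> adj s) B u v"
  unfolding codilator_def
proof (intro conjI allI impI)
  show "codilation C (t \<cdot> adj s) B u v"
    by (rule codilation)
  fix T t1 t2
  assume cd: "codilation C (t \<cdot> adj s) T t1 t2"
  then have t1: "dom t1 = X" "cod t1 = T" "isometry C t1"
    and t2: "dom t2 = Y" "cod t2 = T" "isometry C t2"
    and t21: "adj t2 \<cdot> t1 = t \<cdot> adj s"
    unfolding codilation_def hom_iff by simp_all
  have "adj t2 \<cdot> (t1 \<cdot> s) = t"
    using t1 t2 s(2) t21 by simp
  then have "t1 \<cdot> s = t2 \<cdot> t"
    using isometry_factor[of "t1 \<cdot> s" t2] isometry_cmp[OF s(2) t1(3)] t1 t2 t(2) by simp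
  then have "\<exists>!w. w \<in> hom C B T \<and> w \<cdot> u = t1 \<and> w \<cdot> v = t2"
    using pushout_factor[of t1 t2] t1 t2 by simp
  then show "\<exists>!w. w \<in> hom C B T \<and> isometry C w \<and> w \<cdot> u = t1 \<and> w \<cdot> v = t2"
    using codilation_map_isometry[OF cd] unfolding hom_iff by blast
qed

end

theorem proposition7p20:
  fixes C :: "('o, 'm) scat"
    and A X Y B :: 'o and s t sp tp u v :: 'm
    and F :: "nat \<Rightarrow> 'o" and \<iota> :: "nat \<Rightarrow> 'm"
  assumes "pre_hilbert_star_category C"
    and "s \<in> hom C A X" and "isometry C s"
    and "t \<in> hom C A Y" and "isometry C t"
    and "iso_orth_complement C s sp"
    and "iso_orth_complement C t tp"
    and "F 0 = Dom C sp" and "F 1 = A" and "F 2 = Dom C tp"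
    and "orth_biproduct C {0, 1, 2} F B \<iota>"
    and "u \<in> hom C X B"
    and "Cmp C (Adj C (\<iota> 0)) u = Adj C sp"
    and "Cmp C (Adj C (\<iota> 1)) u = Adj C s"
    and "zero_mor C (Cmp C (Adj C (\<iota> 2)) u)"
    and "v \<in> hom C Y B"
    and "zero_mor C (Cmp C (Adj C (\<iota> 0)) v)"
    and "Cmp C (Adj C (\<iota> 1)) v = Adj C t"
    and "Cmp C (Adj C (\<iota> 2)) v = Adj C tp"
  shows "pushout_square C s t u v \<and> codilator C (Cmp C t (Adj C s)) B u v"
proof -
  interpret codilator_square C A X Y B s t sp tp u v F \<iota>
    by unfold_locales (use assms in auto)
  show ?thesis
    using pushout codilator by simp
qed

end
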